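(* For CUs $\mathcal M=\{1,\dots,M\}$, D2D pairs $\mathcal N=\{1,\dots,N\}$, values $v_{mn}$ and price-step $\epsilon>0$, the computational complexity of the Distributed Matching Algorithm (DMA) described in the context is $\mathcal O\!\left(\frac{MNV_{max}}{\epsilon}\right)$, where $V_{max}=\max_{m,n}v_{mn}$.
   Context: Values: $v_{mn}=w_nu_{mn}$, where $w_n$ is a given weight and $u_{mn}$ is the optimal value of $\max_\pi\mathbb{E}\{\pi(\mathbf r_{mn})r^D_{mn}\}$ s.t. $\mathbb{E}\{(1-\pi(\mathbf r_{mn}))r^C_{mn}\}\ge r_{th}$ (policies $\pi$ map the random state $(r^C_{mn},r^D_{mn})$ of nonnegative rates to $[0,1]$) if feasible, $u_{mn}=-1$ otherwise. DMA: demand function $D_n(\boldsymbol\beta)=\arg\max_{m}(v_{mn}-\beta_m)$ if $\max_m(v_{mn}-\beta_m)\ge0$, else $0$ (no ties assumed). Initialize $t=1$, $p_m=\beta^1_m=0$, all CUs unmatched ($\mu^0(m)=0$). Iteration $t$: (i) each unmatched D2D pair $n$ computes $m=D_n(\boldsymbol\beta^t)$; if $m\ne0$ it proposes to CU $m$ ($g^t_{mn}=1$), else it makes no proposal and stays unmatched. (ii) For each CU $m$: if $\sum_ng^t_{mn}=0$, $\sum_ng^{t-1}_{mn}>0$ and $m$ is unmatched, match $m$ to a random $n^*$ with $g^{t-1}_{mn^*}=1$, set $p_m=\beta^{t-1}_m$, $\beta^{t+1}_m=\beta^t_m$, and set $g^t_{m^*n^*}=0$ for $m^*=D_{n^*}(\boldsymbol\beta^t)$.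 (iii) For each CU $m$: if $\sum_ng^t_{mn}=1$ and ($m$ was unmatched at $t-1$ or $p_m<\beta^t_m$), match $m$ to the proposer, set $p_m=\beta^t_m$, $\beta^{t+1}_m=\beta^t_m$; else if $\sum_ng^t_{mn}\ge1$, make $m$ unmatched, and if its previous partner $n\ne0$ had $p_m=\beta^t_m$ set $g^t_{mn}=1$, and set $\beta^{t+1}_m=\beta^t_m+\epsilon$; otherwise $\beta^{t+1}_m=\beta^t_m$. (iv) $t\leftarrow t+1$; stop when an iteration has no proposal. *)

theory Defs
  imports Main "HOL.Real"
begin

text \<open>
  CUs are indexed by 1..M, D2D pairs by 1..N, the value of CU m for pair n
  is v m n.  A state describes the situation at the beginning of iteration t:
  the current prices beta^t, the previous prices beta^(t-1), the prices p,
  the matching mu^(t-1) (CU m is matched to pair match m, 0 = unmatched), and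
  the proposal indicators g^(t-1) (after all modifications of iteration t-1).
\<close>

record dma_state =
  beta :: "nat \<Rightarrow> real"
  beta_prev :: "nat \<Rightarrow> real"
  price :: "nat \<Rightarrow> real"
  mtch :: "nat \<Rightarrow> nat"
  gprev :: "nat \<Rightarrow> nat \<Rightarrow> bool"

definition dma_init :: dma_state where
  "dma_init = \<lparr> beta = (\<lambda>_. 0), beta_prev = (\<lambda>_. 0), price = (\<lambda>_. 0),
                mtch = (\<lambda>_. 0), gprev = (\<lambda>_ _. False) \<rparr>"

text \<open>Demand function D_n(beta): an argmax of v m n - beta m if the maximum is
  nonnegative, else 0 (ties are excluded by hypothesis in the theorem).\<close>
definition demand :: "nat \<Rightarrow> (nat \<Rightarrow> nat \<Rightarrow> real) \<Rightarrow> (nat \<Rightarrow> real) \<Rightarrow> nat \<Rightarrow> nat" where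
  "demand M v b n =
     (if \<exists>m\<in>{1..M}. v m n - b m \<ge> 0
      then (SOME m. m \<in> {1..M} \<and> (\<forall>m'\<in>{1..M}. v m' n - b m' \<le> v m n - b m))
      else 0)"

definition no_ties :: "nat \<Rightarrow> nat \<Rightarrow> (nat \<Rightarrow> nat \<Rightarrow> real) \<Rightarrow> (nat \<Rightarrow> real) \<Rightarrow> bool" where
  "no_ties M N v b =
     (\<forall>n\<in>{1..N}. \<forall>m1\<in>{1..M}. \<forall>m2\<in>{1..M}.
        (\<forall>m'\<in>{1..M}. v m' n - b m' \<le> v m1 n - b m1) \<longrightarrow>
        (\<forall>m'\<in>{1..M}. v m' n - b m' \<le> v m2 n - b m2) \<longrightarrow> m1 = m2)"

definition d2d_unmatched :: "nat \<Rightarrow> (nat \<Rightarrow> nat) \<Rightarrow> nat \<Rightarrow> bool" where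
  "d2d_unmatched M mu n = (\<forall>m\<in>{1..M}. mu m \<noteq> n)"

definition props :: "nat \<Rightarrow> nat \<Rightarrow> (nat \<Rightarrow> nat \<Rightarrow> real) \<Rightarrow> dma_state \<Rightarrow> nat \<Rightarrow> nat \<Rightarrow> bool" where
  "props M N v s m n =
     (m \<in> {1..M} \<and> n \<in> {1..N} \<and> d2d_unmatched M (mtch s) n \<and> demand M v (beta s) n = m)"

definition no_proposal :: "nat \<Rightarrow> nat \<Rightarrow> (nat \<Rightarrow> nat \<Rightarrow> real) \<Rightarrow> dma_state \<Rightarrow> bool" where
  "no_proposal M N v s = (\<forall>m n. \<not> props M N v s m n)"

definition cnt :: "nat \<Rightarrow> (nat \<Rightarrow> nat \<Rightarrow> bool) \<Rightarrow> nat \<Rightarrow> nat" where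
  "cnt N g m = card {n \<in> {1..N}. g m n}"

text \<open>Step (ii) applies to CU m (all CUs act in parallel on the proposals of step (i)).\<close>
definition case_ii :: "nat \<Rightarrow> nat \<Rightarrow> (nat \<Rightarrow> nat \<Rightarrow> real) \<Rightarrow> dma_state \<Rightarrow> nat \<Rightarrow> bool" where
  "case_ii M N v s m =
     (m \<in> {1..M} \<and> cnt N (props M N v s) m = 0 \<and> cnt N (gprev s) m > 0 \<and> mtch s m = 0)"

text \<open>Proposals after the removals of step (ii); ch m is the random choice n* of CU m.\<close>
definition props2 :: "nat \<Rightarrow> nat \<Rightarrow> (nat \<Rightarrow> nat \<Rightarrow> real) \<Rightarrow> (nat \<Rightarrow> nat) \<Rightarrow> dma_state \<Rightarrow> nat \<Rightarrow> nat \<Rightarrow> bool" where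
  "props2 M N v ch s m n =
     (props M N v s m n \<and>
      \<not> (\<exists>m'. case_ii M N v s m' \<and> ch m' = n \<and> m = demand M v (beta s) n))"

definition acc_iii :: "nat \<Rightarrow> nat \<Rightarrow> (nat \<Rightarrow> nat \<Rightarrow> real) \<Rightarrow> (nat \<Rightarrow> nat) \<Rightarrow> dma_state \<Rightarrow> nat \<Rightarrow> bool" where
  "acc_iii M N v ch s m =
     (m \<in> {1..M} \<and> \<not> case_ii M N v s m \<and> cnt N (props2 M N v ch s) m = 1 \<and>
      (mtch s m = 0 \<or> price s m < beta s m))"

definition rej_iii :: "nat \<Rightarrow> nat \<Rightarrow> (nat \<Rightarrow> nat \<Rightarrow> real) \<Rightarrow> (nat \<Rightarrow> nat) \<Rightarrow> dma_state \<Rightarrow> nat \<Rightarrow> bool" where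
  "rej_iii M N v ch s m =
     (m \<in> {1..M} \<and> \<not> case_ii M N v s m \<and> \<not> acc_iii M N v ch s m \<and>
      cnt N (props2 M N v ch s) m \<ge> 1)"

definition dma_iter :: "nat \<Rightarrow> nat \<Rightarrow> (nat \<Rightarrow> nat \<Rightarrow> real) \<Rightarrow> real \<Rightarrow> (nat \<Rightarrow> nat) \<Rightarrow> dma_state \<Rightarrow> dma_state" where
  "dma_iter M N v eps ch s =
     (let g2 = props2 M N v ch s in
      \<lparr> beta = (\<lambda>m. if rej_iii M N v ch s m then beta s m + eps else beta s m),
        beta_prev = beta s,
        price = (\<lambda>m. if case_ii M N v s m then beta_prev s m
                     else if acc_iii M N v ch s m then beta s m
                     else price s m),
        mtch = (\<lambda>m. if case_ii M N v s m then ch m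
                    else if acc_iii M N v ch s m then (THE n. n \<in> {1..N} \<and> g2 m n)
                    else if rej_iii M N v ch s m then 0
                    else mtch s m),
        gprev = (\<lambda>m n. g2 m n \<or>
                   (rej_iii M N v ch s m \<and> n = mtch s m \<and> n \<noteq> 0 \<and> price s m = beta s m)) \<rparr>)"

text \<open>Transition relation: the random choices n* are arbitrary admissible ones.\<close>
definition dma_step :: "nat \<Rightarrow> nat \<Rightarrow> (nat \<Rightarrow> nat \<Rightarrow> real) \<Rightarrow> real \<Rightarrow> dma_state \<Rightarrow> dma_state \<Rightarrow> bool" where
  "dma_step M N v eps s s' =
     (\<exists>ch. (\<forall>m. case_ii M N v s m \<longrightarrow> ch m \<in> {1..N} \<and> gprev s m (ch m)) \<and>
           s' = dma_iter M N v eps ch s)"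

end

theory Submission
  imports Defs
begin

(* Let Phi be the number of matched D2D pairs plus
   sum_m (2 beta_m + p_m) / eps. In every iteration with a proposal Phi grows by
   at least 1: a CU that rejects raises beta_m by eps, a matched CU that switches
   to a new proposer raises p_m by at least eps (p_m lies on the eps-grid below
   beta_m), and each such CU unmatches at most one pair; if no CU rejects, some
   unmatched proposer becomes matched. A CU only raises beta_m while a pair still
   demands it, i.e. while beta_m <= v_mn <= V_max, so Phi <= N + 3 M (V_max + eps) / eps
   bounds the number of iterations. *)

lemma demand_nonneg:
  assumes "demand M v b n = m" and "m \<in> {1..M}"
  shows "0 \<le> v m n - b m"
proof -
  let ?f = "\<lambda>m. v m n - b m"
  have "\<exists>m0\<in>{1..M}. 0 \<le> ?f m0"
    using assms unfolding demand_def by (auto split: if_splits)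
  then obtain m0 where m0: "m0 \<in> {1..M}" "0 \<le> ?f m0" by blast
  have "Max (?f ` {1..M}) \<in> ?f ` {1..M}"
    by (rule Max_in) (use m0 in auto)
  then obtain mx where mx: "mx \<in> {1..M}" "Max (?f ` {1..M}) = ?f mx" by auto
  define is_argmax where "is_argmax m' \<longleftrightarrow> m' \<in> {1..M} \<and> (\<forall>m''\<in>{1..M}. ?f m'' \<le> ?f m')" for m'
  have "?f m' \<le> ?f mx" if "m' \<in> {1..M}" for m'
  proof -
    have "?f m' \<le> Max (?f ` {1..M})" using that by (intro Max_ge) auto
    with mx(2) show ?thesis by linarith
  qed
  with mx(1) have "is_argmax mx" unfolding is_argmax_def by blast
  moreover have "demand M v b n = (SOME m'. is_argmax m')"
    using m0 unfolding demand_def is_argmax_def by auto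
  ultimately have "is_argmax m"
    using assms(1) by (metis someI)
  with m0 show ?thesis unfolding is_argmax_def by fastforce
qed

lemma cnt_ge_1_iff: "1 \<le> cnt N g m \<longleftrightarrow> (\<exists>n\<in>{1..N}. g m n)"
  unfolding cnt_def by (auto simp: Suc_le_eq card_gt_0_iff)

lemma cnt_eq_1_the:
  assumes "cnt N g m = 1" and "n \<in> {1..N}" and "g m n"
  shows "(THE n. n \<in> {1..N} \<and> g m n) = n"
proof -
  obtain a where "{n \<in> {1..N}. g m n} = {a}"
    using assms(1) unfolding cnt_def by (auto simp: card_1_singleton_iff)
  with assms(2,3) have "n' \<in> {1..N} \<and> g m n' \<longleftrightarrow> n' = n" for n'
    by (auto simp: set_eq_iff)
  then show ?thesis by simp
qed

lemma dma_iter_sel [simp]: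
  "beta (dma_iter M N v eps ch s) =
     (\<lambda>m. if rej_iii M N v ch s m then beta s m + eps else beta s m)"
  "beta_prev (dma_iter M N v eps ch s) = beta s"
  "price (dma_iter M N v eps ch s) =
     (\<lambda>m. if case_ii M N v s m then beta_prev s m
          else if acc_iii M N v ch s m then beta s m else price s m)"
  "mtch (dma_iter M N v eps ch s) =
     (\<lambda>m. if case_ii M N v s m then ch m
          else if acc_iii M N v ch s m then (THE n. n \<in> {1..N} \<and> props2 M N v ch s m n)
          else if rej_iii M N v ch s m then 0
          else mtch s m)"
  by (simp_all add: dma_iter_def Let_def)

lemma acc_iii_not_case_ii: "acc_iii M N v ch s m \<Longrightarrow> \<not> case_ii M N v s m"
  unfolding acc_iii_def by blast

lemma rej_iii_not_case_ii: "rej_iii M N v ch s m \<Longrightarrow> \<not> case_ii M N v s m"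
  unfolding rej_iii_def by blast

lemma rej_iii_not_acc_iii: "rej_iii M N v ch s m \<Longrightarrow> \<not> acc_iii M N v ch s m"
  unfolding rej_iii_def by blast

definition price_invariant :: "real \<Rightarrow> dma_state \<Rightarrow> nat \<Rightarrow> bool" where
  "price_invariant eps s m \<longleftrightarrow>
     (beta s m = beta_prev s m \<or> beta s m = beta_prev s m + eps) \<and>
     price s m \<le> beta_prev s m \<and>
     (price s m = beta s m \<or> price s m \<le> beta s m - eps)"

definition beta_bounded :: "nat \<Rightarrow> real \<Rightarrow> real \<Rightarrow> dma_state \<Rightarrow> bool" where
  "beta_bounded M V eps s \<longleftrightarrow> (\<forall>m\<in>{1..M}. beta s m \<le> max 0 (V + eps))"

definition matched_pairs :: "nat \<Rightarrow> nat \<Rightarrow> dma_state \<Rightarrow> nat set" where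
  "matched_pairs M N s = {n \<in> {1..N}. \<exists>m\<in>{1..M}. mtch s m = n}"

definition potential :: "nat \<Rightarrow> nat \<Rightarrow> real \<Rightarrow> dma_state \<Rightarrow> real" where
  "potential M N eps s =
     card (matched_pairs M N s) + (\<Sum>m\<in>{1..M}. 2 * beta s m + price s m) / eps"

lemma dma_init_invariants:
  "price_invariant eps dma_init m" "beta_bounded M V eps dma_init" "potential M N eps dma_init = 0"
  by (simp_all add: price_invariant_def beta_bounded_def potential_def matched_pairs_def dma_init_def)

lemma price_invariant_dma_iter:
  assumes "0 < eps" and "price_invariant eps s m"
  shows "price_invariant eps (dma_iter M N v eps ch s) m"
  using assms unfolding price_invariant_def
  by (auto simp: rej_iii_not_case_ii rej_iii_not_acc_iii acc_iii_not_case_ii)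

lemma rej_iii_beta_le:
  assumes "rej_iii M N v ch s m" and "\<forall>m\<in>{1..M}. \<forall>n\<in>{1..N}. v m n \<le> V"
  shows "beta s m \<le> V"
proof -
  from assms(1) obtain n where m: "m \<in> {1..M}" and n: "n \<in> {1..N}" "props2 M N v ch s m n"
    unfolding rej_iii_def cnt_ge_1_iff by blast
  then have "demand M v (beta s) n = m" unfolding props2_def props_def by blast
  with m have "0 \<le> v m n - beta s m" by (intro demand_nonneg)
  with assms(2) m n(1) show ?thesis by force
qed

lemma beta_bounded_dma_iter:
  assumes "\<forall>m\<in>{1..M}. \<forall>n\<in>{1..N}. v m n \<le> V" and "beta_bounded M V eps s"
  shows "beta_bounded M V eps (dma_iter M N v eps ch s)"
  using assms rej_iii_beta_le[OF _ assms(1)] unfolding beta_bounded_def by fastforce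

lemma weighted_price_increase:
  assumes "0 < eps" and "price_invariant eps s m"
  shows "eps * (of_bool (rej_iii M N v ch s m \<or> acc_iii M N v ch s m \<and> mtch s m \<noteq> 0)
                + of_bool (rej_iii M N v ch s m))
    \<le> (2 * beta (dma_iter M N v eps ch s) m + price (dma_iter M N v eps ch s) m)
       - (2 * beta s m + price s m)"
proof -
  have "price s m \<le> beta s m - eps" if "acc_iii M N v ch s m" and "mtch s m \<noteq> 0"
    using that assms(2) unfolding acc_iii_def price_invariant_def by auto
  then show ?thesis
    using assms unfolding price_invariant_def
    by (auto simp: rej_iii_not_case_ii rej_iii_not_acc_iii acc_iii_not_case_ii)
qed

lemma mtch_dma_iter_kept:
  assumes "mtch s m \<noteq> 0" and "\<not> rej_iii M N v ch s m" and "\<not> acc_iii M N v ch s m"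
  shows "mtch (dma_iter M N v eps ch s) m = mtch s m"
  using assms by (simp add: case_ii_def)

lemma proposer_matched_dma_iter:
  assumes proposal: "props M N v s m n" and no_rej: "\<forall>m\<in>{1..M}. \<not> rej_iii M N v ch s m"
  shows "n \<in> matched_pairs M N (dma_iter M N v eps ch s)"
proof (cases "props2 M N v ch s m n")
  case False
  then obtain m' where "case_ii M N v s m'" and "ch m' = n"
    using proposal unfolding props2_def by blast
  then have "m' \<in> {1..M}" and "mtch (dma_iter M N v eps ch s) m' = n"
    by (simp_all add: case_ii_def)
  moreover have "n \<in> {1..N}" using proposal unfolding props_def by blast
  ultimately show ?thesis unfolding matched_pairs_def by blast
next
  case True
  from proposal have m: "m \<in> {1..M}" and n: "n \<in> {1..N}" unfolding props_def by auto
  from proposal n have "\<not> case_ii M N v s m"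
    unfolding case_ii_def using cnt_ge_1_iff[of N "props M N v s" m] by auto
  moreover from True n have "1 \<le> cnt N (props2 M N v ch s) m" unfolding cnt_ge_1_iff by blast
  ultimately have acc: "acc_iii M N v ch s m"
    using no_rej m unfolding rej_iii_def by blast
  then have "cnt N (props2 M N v ch s) m = 1" unfolding acc_iii_def by blast
  then have "(THE n'. n' \<in> {1..N} \<and> props2 M N v ch s m n') = n"
    using n True by (rule cnt_eq_1_the)
  with acc have "mtch (dma_iter M N v eps ch s) m = n"
    by (simp add: acc_iii_not_case_ii)
  with m n show ?thesis unfolding matched_pairs_def by blast
qed

lemma card_le_card_Diff_image_add:
  assumes "finite B"
  shows "card A \<le> card (A - f ` B) + card B"
proof (cases "finite A")
  case True
  then have "card A \<le> card ((A - f ` B) \<union> f ` B)"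
    using assms by (intro card_mono) auto
  also have "\<dots> \<le> card (A - f ` B) + card (f ` B)" by (rule card_Un_le)
  also have "\<dots> \<le> card (A - f ` B) + card B" using card_image_le[OF assms] by simp
  finally show ?thesis .
qed simp

lemma card_matched_pairs_dma_iter:
  fixes ch :: "nat \<Rightarrow> nat"
  assumes "\<not> no_proposal M N v s"
  defines "raising \<equiv> {m \<in> {1..M}. rej_iii M N v ch s m \<or> acc_iii M N v ch s m \<and> mtch s m \<noteq> 0}"
    and "rejecting \<equiv> {m \<in> {1..M}. rej_iii M N v ch s m}"
  shows "card (matched_pairs M N s) + 1
    \<le> card (matched_pairs M N (dma_iter M N v eps ch s)) + card raising + card rejecting"
proof -
  let ?A = "matched_pairs M N s" and ?A' = "matched_pairs M N (dma_iter M N v eps ch s)"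
  let ?kept = "?A - mtch s ` raising"
  have fin: "finite ?A'" "finite raising" "finite rejecting"
    unfolding matched_pairs_def raising_def rejecting_def by auto
  have kept: "?kept \<subseteq> ?A'"
  proof
    fix n assume "n \<in> ?kept"
    then obtain m where m: "m \<in> {1..M}" "m \<notin> raising" "mtch s m = n" "n \<in> {1..N}"
      unfolding matched_pairs_def by blast
    then have "mtch (dma_iter M N v eps ch s) m = mtch s m"
      by (intro mtch_dma_iter_kept) (auto simp: raising_def)
    with m have "mtch (dma_iter M N v eps ch s) m = n" by simp
    with m show "n \<in> ?A'" unfolding matched_pairs_def by blast
  qed
  from fin(2) have lost: "card ?A \<le> card ?kept + card raising"
    by (rule card_le_card_Diff_image_add)
  show ?thesis
  proof (cases "rejecting = {}")
    case True
    from assms(1) obtain m n where proposal: "props M N v s m n"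
      unfolding no_proposal_def by blast
    with True have "n \<in> ?A'"
      by (intro proposer_matched_dma_iter) (auto simp: rejecting_def)
    moreover have "n \<notin> ?A"
      using proposal unfolding props_def d2d_unmatched_def matched_pairs_def by auto
    ultimately have "card ?kept + 1 \<le> card ?A'"
      using kept fin(1) card_mono[of ?A' "insert n ?kept"] finite_subset[OF kept]
      by (simp add: card_insert_if)
    with lost show ?thesis by linarith
  next
    case False
    then have "1 \<le> card rejecting" using fin(3) by (simp add: Suc_le_eq card_gt_0_iff)
    with lost card_mono[OF fin(1) kept] show ?thesis by linarith
  qed
qed

lemma potential_dma_iter:
  assumes "0 < eps" and "\<And>m. price_invariant eps s m" and "\<not> no_proposal M N v s"
  shows "potential M N eps s + 1 \<le> potential M N eps (dma_iter M N v eps ch s)"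
proof -
  let ?s' = "dma_iter M N v eps ch s"
  let ?raising = "\<lambda>m. rej_iii M N v ch s m \<or> acc_iii M N v ch s m \<and> mtch s m \<noteq> 0"
  let ?rejecting = "\<lambda>m. rej_iii M N v ch s m"
  have "eps * (real (card {m \<in> {1..M}. ?raising m}) + real (card {m \<in> {1..M}. ?rejecting m}))
      = (\<Sum>m\<in>{1..M}. eps * (of_bool (?raising m) + of_bool (?rejecting m)))"
  proof -
    have card_eq_sum: "real (card {m \<in> {1..M}. P m}) = (\<Sum>m\<in>{1..M}. of_bool (P m))" for P
      by (simp add: Int_def)
    show ?thesis by (simp only: card_eq_sum distrib_left sum.distrib sum_distrib_left)
  qed
  also have "\<dots> \<le> (\<Sum>m\<in>{1..M}. (2 * beta ?s' m + price ?s' m) - (2 * beta s m + price s m))"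
    by (intro sum_mono weighted_price_increase assms(1,2))
  also have "\<dots> = (\<Sum>m\<in>{1..M}. 2 * beta ?s' m + price ?s' m) - (\<Sum>m\<in>{1..M}. 2 * beta s m + price s m)"
    by (simp add: sum_subtractf)
  finally have "real (card {m \<in> {1..M}. ?raising m}) + real (card {m \<in> {1..M}. ?rejecting m})
      \<le> (\<Sum>m\<in>{1..M}. 2 * beta ?s' m + price ?s' m) / eps - (\<Sum>m\<in>{1..M}. 2 * beta s m + price s m) / eps"
    using assms(1) by (simp add: field_simps)
  with card_matched_pairs_dma_iter[OF assms(3), where ch = ch and eps = eps] show ?thesis
    unfolding potential_def by linarith
qed

lemma potential_le:
  assumes "0 < eps" and "\<And>m. price_invariant eps s m" and "beta_bounded M V eps s"
  shows "potential M N eps s \<le> real N + 3 * real M * max 0 (V + eps) / eps"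
proof -
  have "card (matched_pairs M N s) \<le> card {1..N}"
    by (intro card_mono) (auto simp: matched_pairs_def)
  moreover have "2 * beta s m + price s m \<le> 3 * max 0 (V + eps)" if "m \<in> {1..M}" for m
  proof -
    have "price s m \<le> beta s m" "beta s m \<le> max 0 (V + eps)"
      using assms(1) assms(2)[of m] assms(3) that unfolding price_invariant_def beta_bounded_def
      by auto
    then show ?thesis by (smt (verit))
  qed
  then have "(\<Sum>m\<in>{1..M}. 2 * beta s m + price s m) \<le> M * (3 * max 0 (V + eps))"
    using sum_mono[of "{1..M}" "\<lambda>m. 2 * beta s m + price s m" "\<lambda>_. 3 * max 0 (V + eps)"] by simp
  ultimately show ?thesis
    using assms(1) unfolding potential_def by (simp add: divide_right_mono add_mono)
qed

lemma bounded_potential_stops: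
  fixes f :: "nat \<Rightarrow> real"
  assumes "0 \<le> f 0" and bounded: "\<And>k. f k \<le> B" and increase: "\<And>k. \<not> P k \<Longrightarrow> f k + 1 \<le> f (Suc k)"
  shows "\<exists>j. P j \<and> real j \<le> B"
proof (rule ccontr)
  assume "\<nexists>j. P j \<and> real j \<le> B"
  then have runs: "\<not> P j" if "real j \<le> B" for j
    using that by blast
  have grows: "real k \<le> B + 1 \<Longrightarrow> real k \<le> f k" for k
  proof (induction k)
    case 0
    then show ?case using assms(1) by simp
  next
    case (Suc k)
    then have "real k \<le> f k" and "\<not> P k" using runs by auto
    with increase show ?case by fastforce
  qed
  define K where "K = nat \<lfloor>B\<rfloor> + 1"
  have "0 \<le> B" using assms(1) bounded order_trans by blast
  then have "B < real K" and "real K \<le> B + 1"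
    unfolding K_def by linarith+
  with grows bounded[of K] show False by fastforce
qed

lemma potential_bound_plus_one_le:
  fixes M N :: nat and V eps :: real
  assumes "1 \<le> M" and "1 \<le> N" and "0 < eps"
  shows "real N + 3 * real M * max 0 (V + eps) / eps + 1 \<le> 8 * real M * real N * max 1 (V / eps)"
proof -
  define X where "X = max 1 (V / eps)"
  have "max 0 (V + eps) / eps = max 0 (V / eps + 1)"
    using assms(3) by (simp add: max_divide_distrib_right add_divide_distrib)
  also have "\<dots> \<le> 2 * X"
    unfolding X_def by (auto simp: max_def)
  finally have "3 * real M * (max 0 (V + eps) / eps) \<le> 3 * real M * (2 * X)"
    by (intro mult_left_mono) auto
  then have "3 * real M * max 0 (V + eps) / eps \<le> 6 * real M * X" by simp
  moreover have "1 \<le> X" and "1 \<le> real M" and "1 \<le> real N"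
    using assms unfolding X_def by simp_all
  then have "1 \<le> real M * real N * X" and "real N \<le> real M * real N * X"
    and "real M * X \<le> real M * real N * X"
    by (simp_all add: mult_ge1_I mult_le_cancel_right1 mult_le_cancel_left1)
  ultimately show ?thesis unfolding X_def[symmetric] by linarith
qed

lemma dma_run_stops:
  assumes eps: "0 < eps" and values_le: "\<forall>m\<in>{1..M}. \<forall>n\<in>{1..N}. v m n \<le> V"
    and init: "s 1 = dma_init" and steps: "\<forall>t\<ge>1. dma_step M N v eps (s t) (s (Suc t))"
  shows "\<exists>j. no_proposal M N v (s (Suc j)) \<and> real j \<le> real N + 3 * real M * max 0 (V + eps) / eps"
proof -
  have next_state: "\<exists>ch. s (Suc (Suc k)) = dma_iter M N v eps ch (s (Suc k))" for k
    using steps[rule_format, of "Suc k"] unfolding dma_step_def by auto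
  have invariants: "(\<forall>m. price_invariant eps (s (Suc k)) m) \<and> beta_bounded M V eps (s (Suc k))" for k
  proof (induction k)
    case 0
    show ?case using init by (simp add: dma_init_invariants)
  next
    case (Suc k)
    with next_state[of k] show ?case
      using price_invariant_dma_iter[OF eps] beta_bounded_dma_iter[OF values_le] by auto
  qed
  show ?thesis
  proof (rule bounded_potential_stops[where f = "\<lambda>k. potential M N eps (s (Suc k))"])
    show "0 \<le> potential M N eps (s (Suc 0))"
      using init by (simp add: dma_init_invariants)
    show "potential M N eps (s (Suc k)) \<le> real N + 3 * real M * max 0 (V + eps) / eps" for k
      using potential_le[OF eps] invariants by blast
    show "potential M N eps (s (Suc k)) + 1 \<le> potential M N eps (s (Suc (Suc k)))"
      if "\<not> no_proposal M N v (s (Suc k))" for k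
      using next_state[of k] potential_dma_iter[OF eps _ that] invariants by auto
  qed
qed

theorem proposition2:
  "\<exists>C>0. \<forall>(M::nat) (N::nat) (v::nat \<Rightarrow> nat \<Rightarrow> real) (eps::real) (s::nat \<Rightarrow> dma_state).
     1 \<le> M \<longrightarrow> 1 \<le> N \<longrightarrow> eps > 0 \<longrightarrow>
     s 1 = dma_init \<longrightarrow>
     (\<forall>t\<ge>1. dma_step M N v eps (s t) (s (Suc t))) \<longrightarrow>
     (\<forall>t\<ge>1. no_ties M N v (beta (s t))) \<longrightarrow>
     (\<exists>T\<ge>1. no_proposal M N v (s T) \<and>
        real T \<le> C * real M * real N *
          max 1 (Max {v m n | m n. m \<in> {1..M} \<and> n \<in> {1..N}} / eps))"
proof (rule exI[of _ 8], intro conjI allI impI)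
  fix M N :: nat and v :: "nat \<Rightarrow> nat \<Rightarrow> real" and eps :: real and s :: "nat \<Rightarrow> dma_state"
  assume M: "1 \<le> M" and N: "1 \<le> N" and eps: "0 < eps" and init: "s 1 = dma_init"
    and steps: "\<forall>t\<ge>1. dma_step M N v eps (s t) (s (Suc t))"
    and "\<forall>t\<ge>1. no_ties M N v (beta (s t))"
  \<comment> \<open>Unused: the potential argument works for every choice of maximiser in \<open>demand\<close>.\<close>
  define V where "V = Max {v m n | m n. m \<in> {1..M} \<and> n \<in> {1..N}}"
  have "finite {v m n | m n. m \<in> {1..M} \<and> n \<in> {1..N}}"
    using finite_image_set2[of "\<lambda>m. m \<in> {1..M}" "\<lambda>n. n \<in> {1..N}" v] by simp
  then have "\<forall>m\<in>{1..M}. \<forall>n\<in>{1..N}. v m n \<le> V"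
    unfolding V_def by (blast intro: Max_ge)
  from dma_run_stops[OF eps this init steps] obtain j
    where stop: "no_proposal M N v (s (Suc j))"
      and "real j \<le> real N + 3 * real M * max 0 (V + eps) / eps" by blast
  with potential_bound_plus_one_le[OF M N eps, of V]
  have "real (Suc j) \<le> 8 * real M * real N * max 1 (V / eps)" by simp
  with stop show "\<exists>T\<ge>1. no_proposal M N v (s T) \<and>
      real T \<le> 8 * real M * real N * max 1 (Max {v m n | m n. m \<in> {1..M} \<and> n \<in> {1..N}} / eps)"
    unfolding V_def by (intro exI[of _ "Suc j"]) auto
qed simp

end
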